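(* Consider a Markov decision process with states $\mathcal S$, actions $\mathcal A$, transition kernel $\mathcal P$, nonnegative cost bounded above by $\overline{c_\pi}$, starting distribution $\rho$, discount factor $\gamma\in(0,1)$ and policy $\pi$, with $c_\pi(s)=\mathbb E_{a\sim\pi}\mathcal C(s,a)$ and $\mathcal P_\pi(s'\mid s)=\int_{\mathcal A}\pi(a\mid s)\mathcal P(s'\mid s,a)\,\mathrm da$. Let $\mathcal L_\pi(s)=\mathbb E_\pi[\sum_{t=0}^\infty\gamma^t c_\pi(s_t)\mid s_0=s]$ and, for constants $k,\lambda$, $\Delta\mathcal L_\pi(s)=\mathbb E_{s'\sim\mathcal P_\pi(\cdot\mid s)}\mathcal L_\pi(s')-\mathcal L_\pi(s)+k\big[\mathcal L_\pi(s)-\lambda\,\mathbb E_{s'\sim\mathcal P_\pi(\cdot\mid s)}\mathcal L_\pi(s')\big]$. Let $\mathcal U^T_\pi=\frac1T\sum_{t=0}^T\mathcal T(s\mid\rho,\pi,t)$. Suppose $M$ trajectories of length $T$ are sampled, and let $s^m_t$ denote the state of the $m$-th trajectory at timestep $t$. Then for every $\alpha>0$, $$\mathbb P\Big(\Big|\frac1{MT}\sum_{m=1}^M\sum_{t=1}^T\Delta\mathcal L_\pi(s^m_t)-\mathbb E_{s\sim\mathcal U^T_\pi}\Delta\mathcal L_\pi(s)\Big|\ge\alpha\Big)\le 2\exp\Big(-\frac{M\alpha^2(1-\gamma)^2}{((1-k\lambda)^2+(k-1)^2)\,\overline{c_\pi}^2}\Big).$$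
   Context: The state distribution is defined by $\mathcal T(s\mid\rho,\pi,0)=\rho$ and $\mathcal T(s'\mid\rho,\pi,t+1)=\int_{\mathcal S}\int_{\mathcal A}\pi(a\mid s)\mathcal P(s'\mid s,a)\,\mathrm da\,\mathcal T(s\mid\rho,\pi,t)\,\mathrm ds$. Trajectories start from $s_0\sim\rho$ and evolve under $\pi$ and $\mathcal P$. $\overline{c_\pi}$ denotes the maximum of the cost. *)

theory Defs
  imports "HOL-Probability.Probability"
begin

definition Ppi :: "('a \<Rightarrow> 'b measure) \<Rightarrow> ('a \<Rightarrow> 'b \<Rightarrow> 'a measure) \<Rightarrow> 'a \<Rightarrow> 'a measure" where
  "Ppi pol P s = pol s \<bind> (\<lambda>a. P s a)"

definition cpi :: "('a \<Rightarrow> 'b measure) \<Rightarrow> ('a \<Rightarrow> 'b \<Rightarrow> real) \<Rightarrow> 'a \<Rightarrow> real" where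
  "cpi pol C s = (\<integral>a. C s a \<partial>(pol s))"

fun state_dist :: "'a measure \<Rightarrow> ('a \<Rightarrow> 'b measure) \<Rightarrow> ('a \<Rightarrow> 'b \<Rightarrow> 'a measure) \<Rightarrow> nat \<Rightarrow> 'a measure" where
  "state_dist rho pol P 0 = rho"
| "state_dist rho pol P (Suc t) = state_dist rho pol P t \<bind> Ppi pol P"

text \<open>Value function L_pi(s) = E_pi[sum_t gamma^t c_pi(s_t) | s_0 = s]
  = sum_t gamma^t E_{s_t ~ T(.|delta_s,pol,t)} c_pi(s_t).\<close>
definition Lpi :: "'a measure \<Rightarrow> ('a \<Rightarrow> 'b measure) \<Rightarrow> ('a \<Rightarrow> 'b \<Rightarrow> 'a measure) \<Rightarrow> ('a \<Rightarrow> 'b \<Rightarrow> real)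
    \<Rightarrow> real \<Rightarrow> 'a \<Rightarrow> real" where
  "Lpi S pol P C \<gamma> s = (\<Sum>t. \<gamma> ^ t * (\<integral>s'. cpi pol C s' \<partial>(state_dist (return S s) pol P t)))"

definition DeltaL :: "'a measure \<Rightarrow> ('a \<Rightarrow> 'b measure) \<Rightarrow> ('a \<Rightarrow> 'b \<Rightarrow> 'a measure) \<Rightarrow> ('a \<Rightarrow> 'b \<Rightarrow> real)
    \<Rightarrow> real \<Rightarrow> real \<Rightarrow> real \<Rightarrow> 'a \<Rightarrow> real" where
  "DeltaL S pol P C \<gamma> k lam s =
     (\<integral>s'. Lpi S pol P C \<gamma> s' \<partial>(Ppi pol P s)) - Lpi S pol P C \<gamma> s
     + k * (Lpi S pol P C \<gamma> s - lam * (\<integral>s'. Lpi S pol P C \<gamma> s' \<partial>(Ppi pol P s)))"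

text \<open>Law of one trajectory (s_0, ..., s_n): s_0 ~ rho, s_{t+1} ~ P_pi(. | s_t),
  as a measure on functions {0..n} -> S.\<close>
fun traj :: "'a measure \<Rightarrow> 'a measure \<Rightarrow> ('a \<Rightarrow> 'b measure) \<Rightarrow> ('a \<Rightarrow> 'b \<Rightarrow> 'a measure) \<Rightarrow> nat
    \<Rightarrow> (nat \<Rightarrow> 'a) measure" where
  "traj S rho pol P 0 = distr rho (PiM {0} (\<lambda>_. S)) (\<lambda>s. restrict (\<lambda>_. s) {0})"
| "traj S rho pol P (Suc n) = traj S rho pol P n \<bind>
     (\<lambda>\<omega>. distr (Ppi pol P (\<omega> n)) (PiM {0..Suc n} (\<lambda>_. S)) (\<lambda>s. fun_upd \<omega> (Suc n) s))"

definition trajs :: "'a measure \<Rightarrow> 'a measure \<Rightarrow> ('a \<Rightarrow> 'b measure) \<Rightarrow> ('a \<Rightarrow> 'b \<Rightarrow> 'a measure) \<Rightarrow> nat \<Rightarrow> nat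
    \<Rightarrow> (nat \<Rightarrow> nat \<Rightarrow> 'a) measure" where
  "trajs S rho pol P M T = PiM {1..M} (\<lambda>_. traj S rho pol P T)"

end

theory Submission
  imports Defs
begin

(* Since 0 <= c_pi <= cbar, the value function takes values in [0, cbar / (1 - gamma)], and
   Delta L_pi = (1 - k lam) E_{P_pi} L_pi + (k - 1) L_pi therefore ranges over an interval of
   length (|1 - k lam| + |k - 1|) cbar / (1 - gamma) <= sqrt (2 ((1 - k lam)^2 + (k - 1)^2)) cbar / (1 - gamma).
   The time averages of Delta L_pi along the M independent trajectories are i.i.d., bounded by
   the same interval, and have mean E_{U^T_pi} Delta L_pi because the t-th state of a trajectory
   is distributed as T(. | rho, pi, t); Hoeffding's inequality for their average gives the bound. *)

section \<open>Kernels and bounded integrals\<close>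

lemma bind_in_space_prob_algebra:
  assumes "N \<in> space (prob_algebra X)" "K \<in> X \<rightarrow>\<^sub>M prob_algebra Y"
  shows "N \<bind> K \<in> space (prob_algebra Y)"
  using assms by (simp add: space_prob_algebra sets_bind' prob_space_bind')

lemma measurable_integral_kernel:
  fixes f :: "'b \<Rightarrow> real"
  assumes "K \<in> X \<rightarrow>\<^sub>M prob_algebra Y" "f \<in> borel_measurable Y"
  shows "(\<lambda>x. \<integral>y. f y \<partial>K x) \<in> borel_measurable X"
  using measurable_compose[OF measurable_prob_algebraD[OF assms(1)]
      integral_measurable_subprob_algebra[OF assms(2)]] .

lemma integrable_prob_algebra_bounded:
  fixes f :: "'b \<Rightarrow> real"
  assumes N: "N \<in> space (prob_algebra X)" and f: "f \<in> borel_measurable X"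
    and f_range: "\<And>x. x \<in> space X \<Longrightarrow> f x \<in> {l..u}"
  shows "integrable N f"
proof -
  have sets_N: "sets N = sets X" and "prob_space N"
    using N by (auto simp: space_prob_algebra)
  interpret prob_space N by fact
  show ?thesis
    using f_range f sets_eq_imp_space_eq[OF sets_N]
    by (intro integrable_const_bound[where B = "max \<bar>l\<bar> \<bar>u\<bar>"] AE_I2)
       (force cong: measurable_cong_sets[OF sets_N])+
qed

lemma integral_mem_Icc_prob_algebra:
  fixes f :: "'b \<Rightarrow> real"
  assumes N: "N \<in> space (prob_algebra X)" and f: "f \<in> borel_measurable X"
    and f_range: "\<And>x. x \<in> space X \<Longrightarrow> f x \<in> {l..u}"
  shows "(\<integral>x. f x \<partial>N) \<in> {l..u}"
proof -
  have sets_N: "sets N = sets X" and "prob_space N"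
    using N by (auto simp: space_prob_algebra)
  interpret prob_space N by fact
  have "integrable N f"
    using N f f_range by (rule integrable_prob_algebra_bounded)
  then show ?thesis
    using f_range sets_eq_imp_space_eq[OF sets_N]
    by (auto intro!: integral_ge_const integral_le_const)
qed

section \<open>Hoeffding's inequality for i.i.d. samples\<close>

lemma indep_vars_PiM_components:
  assumes M: "\<And>i. i \<in> I \<Longrightarrow> prob_space (M i)"
  shows "prob_space.indep_vars (PiM I M) M (\<lambda>i \<omega>. \<omega> i) I"
proof -
  interpret prob_space "PiM I M"
    using M by (rule prob_space_PiM)
  show ?thesis
  proof (cases "I = {}")
    case True
    then show ?thesis
      unfolding indep_vars_def indep_sets_def by simp
  next
    case False
    have "distr (PiM I M) (PiM I M) (\<lambda>x. restrict x I) = distr (PiM I M) (PiM I M) (\<lambda>x. x)"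
      by (rule distr_cong) (auto simp: space_PiM)
    also have "\<dots> = PiM I (\<lambda>i. distr (PiM I M) (M i) (\<lambda>\<omega>. \<omega> i))"
      using M by (auto simp: distr_PiM_component intro!: PiM_cong)
    finally show ?thesis
      using False by (subst indep_vars_iff_distr_eq_PiM') simp_all
  qed
qed

lemma Hoeffding_PiM_average:
  fixes f :: "'a \<Rightarrow> real" and I :: "'i set" and \<epsilon> :: real
  assumes N: "prob_space N" and I: "finite I" "I \<noteq> {}"
    and f: "f \<in> borel_measurable N" and f_range: "\<And>x. x \<in> space N \<Longrightarrow> f x \<in> {l..u}"
    and lu: "l < u" and \<epsilon>: "0 \<le> \<epsilon>"
  shows "measure (PiM I (\<lambda>_. N))
           {\<omega> \<in> space (PiM I (\<lambda>_. N)). \<epsilon> \<le> \<bar>(\<Sum>i\<in>I. f (\<omega> i)) / card I - (\<integral>x. f x \<partial>N)\<bar>}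
         \<le> 2 * exp (-2 * real (card I) * \<epsilon>\<^sup>2 / (u - l)\<^sup>2)"
proof -
  let ?\<Omega> = "PiM I (\<lambda>_. N)"
  interpret \<Omega>: prob_space ?\<Omega>
    using N by (rule prob_space_PiM)
  obtain i0 where i0: "i0 \<in> I"
    using I by auto
  have distr_f: "distr ?\<Omega> borel (\<lambda>\<omega>. f (\<omega> i)) = distr N borel f" if i: "i \<in> I" for i
  proof -
    have "distr ?\<Omega> borel (\<lambda>\<omega>. f (\<omega> i)) = distr (distr ?\<Omega> N (\<lambda>\<omega>. \<omega> i)) borel f"
      using i f by (simp add: distr_distr comp_def)
    also have "distr ?\<Omega> N (\<lambda>\<omega>. \<omega> i) = N"
      using N i by (intro distr_PiM_component)
    finally show ?thesis .
  qed
  have "\<Omega>.indep_vars (\<lambda>_. N) (\<lambda>i \<omega>. \<omega> i) I"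
    using N by (rule indep_vars_PiM_components)
  then have indep: "\<Omega>.indep_vars (\<lambda>_. borel) (\<lambda>i \<omega>. f (\<omega> i)) I"
    by (rule \<Omega>.indep_vars_compose2[where Y = "\<lambda>_. f"]) (rule f)
  interpret Hoeffding_ineq_iid ?\<Omega> I "\<lambda>i \<omega>. f (\<omega> i)" "\<lambda>\<omega>. f (\<omega> i0)" l u "\<integral>x. f x \<partial>N"
  proof unfold_locales
    show "AE \<omega> in ?\<Omega>. f (\<omega> i0) \<in> {l..u}"
      using f_range i0 by (intro AE_I2) (auto simp: space_PiM)
    have "(\<integral>x. f x \<partial>N) = (\<integral>x. x \<partial>distr N borel f)"
      using f by (simp add: integral_distr)
    also have "\<dots> = \<Omega>.expectation (\<lambda>\<omega>. f (\<omega> i0))"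
      using i0 f by (simp flip: distr_f add: integral_distr)
    finally show "(\<integral>x. f x \<partial>N) \<equiv> \<Omega>.expectation (\<lambda>\<omega>. f (\<omega> i0))"
      by (rule eq_reflection)
  qed (use I indep distr_f i0 f in auto)
  show ?thesis
    using Hoeffding_ineq_abs_ge'[OF \<epsilon> lu \<open>I \<noteq> {}\<close>] by simp
qed

section \<open>Cost, value function and Lyapunov difference\<close>

lemma Ppi_kernel:
  assumes "pol \<in> S \<rightarrow>\<^sub>M prob_algebra A" "(\<lambda>(s, a). P s a) \<in> S \<Otimes>\<^sub>M A \<rightarrow>\<^sub>M prob_algebra S"
  shows "Ppi pol P \<in> S \<rightarrow>\<^sub>M prob_algebra S"
  using measurable_bind_prob_space2[OF assms] unfolding Ppi_def[abs_def] .

lemma state_dist_return_kernel: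
  assumes "Ppi pol P \<in> S \<rightarrow>\<^sub>M prob_algebra S"
  shows "(\<lambda>s. state_dist (return S s) pol P t) \<in> S \<rightarrow>\<^sub>M prob_algebra S"
  by (induction t) (simp_all add: measurable_bind_prob_space assms)

lemma
  fixes C :: "'a \<Rightarrow> 'b \<Rightarrow> real"
  assumes pol: "pol \<in> S \<rightarrow>\<^sub>M prob_algebra A"
    and C_meas: "(\<lambda>(s, a). C s a) \<in> borel_measurable (S \<Otimes>\<^sub>M A)"
  shows cpi_measurable: "cpi pol C \<in> borel_measurable S"
    and cpi_mem_Icc: "\<lbrakk>s \<in> space S; \<And>a. a \<in> space A \<Longrightarrow> C s a \<in> {0..cbar}\<rbrakk>
                        \<Longrightarrow> cpi pol C s \<in> {0..cbar}"
proof -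
  define K where "K s = distr (pol s) (S \<Otimes>\<^sub>M A) (Pair s)" for s
  have K: "K \<in> S \<rightarrow>\<^sub>M prob_algebra (S \<Otimes>\<^sub>M A)"
    unfolding K_def by (rule measurable_distr_prob_space2[OF pol]) simp
  have "cpi pol C s = (\<integral>x. (\<lambda>(s, a). C s a) x \<partial>K s)" if s: "s \<in> space S" for s
  proof -
    have "sets (pol s) = sets A"
      using measurable_space[OF pol s] by (simp add: space_prob_algebra)
    then have "Pair s \<in> pol s \<rightarrow>\<^sub>M S \<Otimes>\<^sub>M A"
      using s by (simp cong: measurable_cong_sets)
    then show ?thesis
      unfolding K_def cpi_def by (subst integral_distr) (auto simp: C_meas)
  qed
  then show "cpi pol C \<in> borel_measurable S"
    using measurable_integral_kernel[OF K C_meas] by (simp cong: measurable_cong)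
  fix s assume s: "s \<in> space S" and "\<And>a. a \<in> space A \<Longrightarrow> C s a \<in> {0..cbar}"
  moreover have "C s \<in> borel_measurable A"
    using measurable_compose[OF measurable_Pair1'[OF s] C_meas] by simp
  ultimately show "cpi pol C s \<in> {0..cbar}"
    unfolding cpi_def by (intro integral_mem_Icc_prob_algebra[OF measurable_space[OF pol s]])
qed

lemma discounted_suminf_mem_Icc:
  fixes \<gamma> c :: real
  assumes "0 \<le> \<gamma>" "\<gamma> < 1" and e: "\<And>t. e t \<in> {0..c}"
  shows "(\<Sum>t. \<gamma> ^ t * e t) \<in> {0..c / (1 - \<gamma>)}"
proof -
  have geometric: "summable (\<lambda>t. \<gamma> ^ t * c)"
    using assms by (intro summable_mult2 summable_geometric) auto
  have le: "\<gamma> ^ t * e t \<le> \<gamma> ^ t * c" and nonneg: "0 \<le> \<gamma> ^ t * e t" for t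
    using e[of t] assms by (auto intro: mult_left_mono)
  have summable: "summable (\<lambda>t. \<gamma> ^ t * e t)"
    by (rule summable_comparison_test'[OF geometric]) (use le nonneg in auto)
  have "(\<Sum>t. \<gamma> ^ t * e t) \<le> (\<Sum>t. \<gamma> ^ t * c)"
    by (rule suminf_le[OF le summable geometric])
  also have "\<dots> = c / (1 - \<gamma>)"
    using assms by (simp add: suminf_mult2[symmetric] suminf_geometric)
  finally show ?thesis
    using suminf_nonneg[OF summable nonneg] by simp
qed

lemma
  assumes Ppi: "Ppi pol P \<in> S \<rightarrow>\<^sub>M prob_algebra S"
    and cpi_meas: "cpi pol C \<in> borel_measurable S"
  shows Lpi_measurable: "Lpi S pol P C \<gamma> \<in> borel_measurable S"
    and Lpi_mem_Icc: "\<lbrakk>0 \<le> \<gamma>; \<gamma> < 1; \<And>s. s \<in> space S \<Longrightarrow> cpi pol C s \<in> {0..cbar}; s \<in> space S\<rbrakk>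
                        \<Longrightarrow> Lpi S pol P C \<gamma> s \<in> {0..cbar / (1 - \<gamma>)}"
proof -
  define e where "e t s = (\<integral>s'. cpi pol C s' \<partial>state_dist (return S s) pol P t)" for t s
  have Lpi_eq: "Lpi S pol P C \<gamma> = (\<lambda>s. \<Sum>t. \<gamma> ^ t * e t s)"
    unfolding Lpi_def e_def ..
  have "e t \<in> borel_measurable S" for t
    unfolding e_def by (rule measurable_integral_kernel[OF state_dist_return_kernel[OF Ppi] cpi_meas])
  then show "Lpi S pol P C \<gamma> \<in> borel_measurable S"
    unfolding Lpi_eq by measurable
  assume "0 \<le> \<gamma>" "\<gamma> < 1" and cpi_range: "\<And>s. s \<in> space S \<Longrightarrow> cpi pol C s \<in> {0..cbar}"
    and s: "s \<in> space S"
  have "e t s \<in> {0..cbar}" for t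
    unfolding e_def using cpi_range
    by (intro integral_mem_Icc_prob_algebra[OF measurable_space[OF state_dist_return_kernel[OF Ppi] s] cpi_meas])
  then show "Lpi S pol P C \<gamma> s \<in> {0..cbar / (1 - \<gamma>)}"
    unfolding Lpi_eq by (rule discounted_suminf_mem_Icc[OF \<open>0 \<le> \<gamma>\<close> \<open>\<gamma> < 1\<close>])
qed

lemma DeltaL_eq:
  "DeltaL S pol P C \<gamma> k lam s
     = (1 - k * lam) * (\<integral>s'. Lpi S pol P C \<gamma> s' \<partial>Ppi pol P s) + (k - 1) * Lpi S pol P C \<gamma> s"
  unfolding DeltaL_def by (simp add: algebra_simps)

(* The left end of the interval is attained when each coefficient meets its unfavourable bound;
   the length |a| B + |b| B is then bounded by Cauchy-Schwarz. *)
lemma linear_combination_mem_Icc: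
  fixes a b x y B :: real
  assumes "x \<in> {0..B}" "y \<in> {0..B}"
  shows "a * x + b * y \<in> {min 0 a * B + min 0 b * B .. min 0 a * B + min 0 b * B + sqrt (2 * (a\<^sup>2 + b\<^sup>2)) * B}"
proof -
  have bounds: "min 0 c * B \<le> c * z \<and> c * z \<le> max 0 c * B" if "z \<in> {0..B}" for c z :: real
    using that by (cases "0 \<le> c") (auto intro: mult_left_mono mult_left_mono_neg mult_nonpos_nonneg)
  have "(\<bar>a\<bar> + \<bar>b\<bar>)\<^sup>2 \<le> 2 * (a\<^sup>2 + b\<^sup>2)"
    using zero_le_power2[of "\<bar>a\<bar> - \<bar>b\<bar>"] by (simp add: power2_eq_square algebra_simps)
  then have "(\<bar>a\<bar> + \<bar>b\<bar>) * B \<le> sqrt (2 * (a\<^sup>2 + b\<^sup>2)) * B"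
    using assms by (intro mult_right_mono real_le_rsqrt) auto
  moreover have "max 0 a * B + max 0 b * B = min 0 a * B + min 0 b * B + (\<bar>a\<bar> + \<bar>b\<bar>) * B"
    by (simp add: max_def min_def algebra_simps)
  ultimately show ?thesis
    using bounds[OF assms(1), of a] bounds[OF assms(2), of b] by simp
qed

lemma
  assumes Ppi: "Ppi pol P \<in> S \<rightarrow>\<^sub>M prob_algebra S"
    and Lpi_meas: "Lpi S pol P C \<gamma> \<in> borel_measurable S"
  shows DeltaL_measurable: "DeltaL S pol P C \<gamma> k lam \<in> borel_measurable S"
    and DeltaL_range: "(\<And>s. s \<in> space S \<Longrightarrow> Lpi S pol P C \<gamma> s \<in> {0..B}) \<Longrightarrow>
           \<exists>l. \<forall>s\<in>space S. DeltaL S pol P C \<gamma> k lam s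
                             \<in> {l .. l + sqrt (2 * ((1 - k * lam)\<^sup>2 + (k - 1)\<^sup>2)) * B}"
proof -
  let ?E = "\<lambda>s. \<integral>s'. Lpi S pol P C \<gamma> s' \<partial>Ppi pol P s"
  have "?E \<in> borel_measurable S"
    by (rule measurable_integral_kernel[OF Ppi Lpi_meas])
  then show "DeltaL S pol P C \<gamma> k lam \<in> borel_measurable S"
    unfolding DeltaL_eq[abs_def] using Lpi_meas by measurable
  assume Lpi_range: "\<And>s. s \<in> space S \<Longrightarrow> Lpi S pol P C \<gamma> s \<in> {0..B}"
  have "?E s \<in> {0..B}" if "s \<in> space S" for s
    using Lpi_range by (rule integral_mem_Icc_prob_algebra[OF measurable_space[OF Ppi that] Lpi_meas])
  then show "\<exists>l. \<forall>s\<in>space S. DeltaL S pol P C \<gamma> k lam s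
                  \<in> {l .. l + sqrt (2 * ((1 - k * lam)\<^sup>2 + (k - 1)\<^sup>2)) * B}"
    using linear_combination_mem_Icc[of _ B _ "1 - k * lam" "k - 1"] Lpi_range
    unfolding DeltaL_eq by blast
qed

lemma
  fixes C :: "'a \<Rightarrow> 'b \<Rightarrow> real"
  assumes pol: "pol \<in> S \<rightarrow>\<^sub>M prob_algebra A" and P: "(\<lambda>(s, a). P s a) \<in> S \<Otimes>\<^sub>M A \<rightarrow>\<^sub>M prob_algebra S"
    and C_meas: "(\<lambda>(s, a). C s a) \<in> borel_measurable (S \<Otimes>\<^sub>M A)"
  shows mdp_DeltaL_measurable: "DeltaL S pol P C \<gamma> k lam \<in> borel_measurable S"
    and mdp_DeltaL_range:
      "\<lbrakk>\<And>s a. s \<in> space S \<Longrightarrow> a \<in> space A \<Longrightarrow> C s a \<in> {0..cbar}; 0 \<le> \<gamma>; \<gamma> < 1\<rbrakk> \<Longrightarrow>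
         \<exists>l. \<forall>s\<in>space S. DeltaL S pol P C \<gamma> k lam s
                   \<in> {l .. l + sqrt (2 * ((1 - k * lam)\<^sup>2 + (k - 1)\<^sup>2)) * (cbar / (1 - \<gamma>))}"
proof -
  have Ppi: "Ppi pol P \<in> S \<rightarrow>\<^sub>M prob_algebra S"
    using pol P by (rule Ppi_kernel)
  have cpi_meas: "cpi pol C \<in> borel_measurable S"
    using pol C_meas by (rule cpi_measurable)
  have Lpi_meas: "Lpi S pol P C \<gamma> \<in> borel_measurable S"
    using Ppi cpi_meas by (rule Lpi_measurable)
  then show "DeltaL S pol P C \<gamma> k lam \<in> borel_measurable S"
    using Ppi by (intro DeltaL_measurable)
  assume C_range: "\<And>s a. s \<in> space S \<Longrightarrow> a \<in> space A \<Longrightarrow> C s a \<in> {0..cbar}"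
    and "0 \<le> \<gamma>" "\<gamma> < 1"
  have "cpi pol C s \<in> {0..cbar}" if "s \<in> space S" for s
    using pol C_meas that by (rule cpi_mem_Icc) (rule C_range[OF that])
  then have "Lpi S pol P C \<gamma> s \<in> {0..cbar / (1 - \<gamma>)}" if "s \<in> space S" for s
    using Ppi cpi_meas \<open>0 \<le> \<gamma>\<close> \<open>\<gamma> < 1\<close> that by (intro Lpi_mem_Icc)
  then show "\<exists>l. \<forall>s\<in>space S. DeltaL S pol P C \<gamma> k lam s
                   \<in> {l .. l + sqrt (2 * ((1 - k * lam)\<^sup>2 + (k - 1)\<^sup>2)) * (cbar / (1 - \<gamma>))}"
    using Ppi Lpi_meas by (intro DeltaL_range)
qed

section \<open>Trajectories\<close>

lemma distr_const_prob_space: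
  assumes "prob_space N" "c \<in> space X"
  shows "distr N X (\<lambda>_. c) = return X c"
proof (rule measure_eqI)
  fix A assume "A \<in> sets (distr N X (\<lambda>_. c))"
  then show "emeasure (distr N X (\<lambda>_. c)) A = emeasure (return X c) A"
    using assms prob_space.emeasure_space_1[OF assms(1)] by (auto simp: emeasure_distr)
qed simp

lemma distr_component_fun_upd:
  assumes Q: "prob_space Q" "sets Q = sets (M i)" and I: "I = insert i J"
    and \<omega>: "\<omega> \<in> space (PiM J M)" and t: "t \<in> I"
  shows "distr (distr Q (PiM I M) (\<lambda>s. fun_upd \<omega> i s)) (M t) (\<lambda>x. x t)
           = (if t = i then Q else return (M t) (\<omega> t))"
proof -
  have "(\<lambda>s. fun_upd \<omega> i s) \<in> Q \<rightarrow>\<^sub>M PiM I M"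
    using I \<omega> Q(2) by (intro measurable_fun_upd[where J = J]) (auto cong: measurable_cong_sets)
  then have "distr (distr Q (PiM I M) (\<lambda>s. fun_upd \<omega> i s)) (M t) (\<lambda>x. x t)
               = distr Q (M t) (\<lambda>s. fun_upd \<omega> i s t)"
    using t by (simp add: distr_distr comp_def)
  also have "\<dots> = (if t = i then Q else return (M t) (\<omega> t))"
    using Q I \<omega> t by (auto simp: distr_id2 space_PiM intro!: distr_const_prob_space)
  finally show ?thesis .
qed

lemma traj_step_kernel:
  assumes Ppi: "Ppi pol P \<in> S \<rightarrow>\<^sub>M prob_algebra S"
  shows "(\<lambda>\<omega>. distr (Ppi pol P (\<omega> n)) (PiM {0..Suc n} (\<lambda>_. S)) (\<lambda>s. fun_upd \<omega> (Suc n) s))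
           \<in> PiM {0..n} (\<lambda>_. S) \<rightarrow>\<^sub>M prob_algebra (PiM {0..Suc n} (\<lambda>_. S))"
proof (rule measurable_distr_prob_space2)
  show "(\<lambda>\<omega>. Ppi pol P (\<omega> n)) \<in> PiM {0..n} (\<lambda>_. S) \<rightarrow>\<^sub>M prob_algebra S"
    by (rule measurable_compose[OF _ Ppi]) simp
  have "(\<lambda>x. (fst x)(Suc n := snd x)) \<in> PiM {0..n} (\<lambda>_. S) \<Otimes>\<^sub>M S \<rightarrow>\<^sub>M PiM {0..Suc n} (\<lambda>_. S)"
    by (rule measurable_fun_upd[where J = "{0..n}"]) auto
  then show "(\<lambda>(\<omega>, s). fun_upd \<omega> (Suc n) s) \<in> PiM {0..n} (\<lambda>_. S) \<Otimes>\<^sub>M S \<rightarrow>\<^sub>M PiM {0..Suc n} (\<lambda>_. S)"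
    by (simp add: case_prod_beta')
qed

lemma traj_in_space_prob_algebra:
  assumes rho: "rho \<in> space (prob_algebra S)" and Ppi: "Ppi pol P \<in> S \<rightarrow>\<^sub>M prob_algebra S"
  shows "traj S rho pol P n \<in> space (prob_algebra (PiM {0..n} (\<lambda>_. S)))"
proof (induction n)
  case 0
  have "sets rho = sets S" "prob_space rho"
    using rho by (auto simp: space_prob_algebra)
  then show ?case
    by (auto simp: space_prob_algebra cong: measurable_cong_sets
             intro!: prob_space.prob_space_distr measurable_restrict)
next
  case (Suc n)
  then show ?case
    by (simp add: bind_in_space_prob_algebra traj_step_kernel[OF Ppi])
qed

lemma
  assumes rho: "rho \<in> space (prob_algebra S)" and Ppi: "Ppi pol P \<in> S \<rightarrow>\<^sub>M prob_algebra S"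
  shows measurable_traj: "measurable (traj S rho pol P n) = measurable (PiM {0..n} (\<lambda>_. S))"
    and space_traj: "space (traj S rho pol P n) = space (PiM {0..n} (\<lambda>_. S))"
proof -
  have "sets (traj S rho pol P n) = sets (PiM {0..n} (\<lambda>_. S))"
    using traj_in_space_prob_algebra[OF rho Ppi] by (simp add: space_prob_algebra)
  then show "measurable (traj S rho pol P n) = measurable (PiM {0..n} (\<lambda>_. S))"
    and "space (traj S rho pol P n) = space (PiM {0..n} (\<lambda>_. S))"
    by (auto intro!: ext measurable_cong_sets sets_eq_imp_space_eq)
qed

lemma distr_traj_Suc_component:
  assumes rho: "rho \<in> space (prob_algebra S)" and Ppi: "Ppi pol P \<in> S \<rightarrow>\<^sub>M prob_algebra S"
    and t: "t \<le> Suc n"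
  shows "distr (traj S rho pol P (Suc n)) S (\<lambda>\<omega>. \<omega> t)
           = traj S rho pol P n \<bind> (\<lambda>\<omega>. if t = Suc n then Ppi pol P (\<omega> n) else return S (\<omega> t))"
proof -
  let ?K = "\<lambda>\<omega>. distr (Ppi pol P (\<omega> n)) (PiM {0..Suc n} (\<lambda>_. S)) (\<lambda>s. fun_upd \<omega> (Suc n) s)"
  have "space (traj S rho pol P n) \<noteq> {}"
    using traj_in_space_prob_algebra[OF rho Ppi] by (auto simp: space_prob_algebra prob_space.not_empty)
  moreover have "?K \<in> traj S rho pol P n \<rightarrow>\<^sub>M subprob_algebra (PiM {0..Suc n} (\<lambda>_. S))"
    unfolding measurable_traj[OF rho Ppi] by (rule measurable_prob_algebraD[OF traj_step_kernel[OF Ppi]])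
  ultimately have "distr (traj S rho pol P (Suc n)) S (\<lambda>\<omega>. \<omega> t)
                     = traj S rho pol P n \<bind> (\<lambda>\<omega>. distr (?K \<omega>) S (\<lambda>x. x t))"
    using t by (simp add: distr_bind)
  also have "\<dots> = traj S rho pol P n \<bind> (\<lambda>\<omega>. if t = Suc n then Ppi pol P (\<omega> n) else return S (\<omega> t))"
  proof (rule bind_cong[OF refl])
    fix \<omega> assume "\<omega> \<in> space (traj S rho pol P n)"
    then have "\<omega> \<in> space (PiM {0..n} (\<lambda>_. S))" "Ppi pol P (\<omega> n) \<in> space (prob_algebra S)"
      by (auto simp: space_traj[OF rho Ppi] space_PiM intro!: measurable_space[OF Ppi])
    then show "distr (?K \<omega>) S (\<lambda>x. x t) = (if t = Suc n then Ppi pol P (\<omega> n) else return S (\<omega> t))"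
      using t by (intro distr_component_fun_upd[where J = "{0..n}"]) (auto simp: space_prob_algebra)
  qed
  finally show ?thesis .
qed

lemma traj_marginal:
  assumes rho: "rho \<in> space (prob_algebra S)" and Ppi: "Ppi pol P \<in> S \<rightarrow>\<^sub>M prob_algebra S"
  shows "t \<le> n \<Longrightarrow> distr (traj S rho pol P n) S (\<lambda>\<omega>. \<omega> t) = state_dist rho pol P t"
proof (induction n arbitrary: t)
  case 0
  have "sets rho = sets S"
    using rho by (simp add: space_prob_algebra)
  then have rho_measurable: "measurable rho = measurable S"
    by (intro ext measurable_cong_sets) simp_all
  have "(\<lambda>s. restrict (\<lambda>_. s) {0::nat}) \<in> rho \<rightarrow>\<^sub>M PiM {0} (\<lambda>_. S)"
    unfolding rho_measurable by (intro measurable_restrict) simp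
  then have "distr (traj S rho pol P 0) S (\<lambda>\<omega>. \<omega> 0) = distr rho S (\<lambda>s. s)"
    by (subst traj.simps, subst distr_distr) (simp_all add: comp_def)
  then show ?case
    using 0 \<open>sets rho = sets S\<close> by (simp add: distr_id2)
next
  case (Suc n)
  have nonempty: "space (traj S rho pol P n) \<noteq> {}"
    using traj_in_space_prob_algebra[OF rho Ppi] by (auto simp: space_prob_algebra prob_space.not_empty)
  show ?case
  proof (cases "t = Suc n")
    case True
    have "traj S rho pol P n \<bind> (\<lambda>\<omega>. Ppi pol P (\<omega> n)) = distr (traj S rho pol P n) S (\<lambda>\<omega>. \<omega> n) \<bind> Ppi pol P"
      using measurable_prob_algebraD[OF Ppi] nonempty
      by (subst bind_distr) (simp_all add: measurable_traj[OF rho Ppi])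
    then show ?thesis
      using True distr_traj_Suc_component[OF rho Ppi Suc.prems] by (simp add: Suc.IH)
  next
    case False
    have "traj S rho pol P n \<bind> (\<lambda>\<omega>. return S (\<omega> t)) = distr (traj S rho pol P n) S (\<lambda>\<omega>. \<omega> t)"
      using False Suc.prems nonempty
      by (subst bind_return_distr') (simp_all add: measurable_traj[OF rho Ppi])
    then show ?thesis
      using False Suc.prems distr_traj_Suc_component[OF rho Ppi Suc.prems] by (simp add: Suc.IH)
  qed
qed

lemma integral_traj_component:
  fixes f :: "'a \<Rightarrow> real"
  assumes rho: "rho \<in> space (prob_algebra S)" and Ppi: "Ppi pol P \<in> S \<rightarrow>\<^sub>M prob_algebra S"
    and f: "f \<in> borel_measurable S" and t: "t \<le> n"
  shows "(\<integral>x. f (x t) \<partial>traj S rho pol P n) = (\<integral>s. f s \<partial>state_dist rho pol P t)"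
proof -
  have "(\<lambda>x. x t) \<in> traj S rho pol P n \<rightarrow>\<^sub>M S"
    unfolding measurable_traj[OF rho Ppi] using t by simp
  then show ?thesis
    by (simp add: integral_distr f flip: traj_marginal[OF rho Ppi t])
qed

lemma traj_time_average:
  fixes f :: "'a \<Rightarrow> real"
  assumes rho: "rho \<in> space (prob_algebra S)" and Ppi: "Ppi pol P \<in> S \<rightarrow>\<^sub>M prob_algebra S"
    and f: "f \<in> borel_measurable S" and f_range: "\<And>s. s \<in> space S \<Longrightarrow> f s \<in> {l..u}"
    and T: "1 \<le> T"
  shows traj_time_average_measurable:
      "(\<lambda>x. (\<Sum>t\<in>{1..T}. f (x t)) / T) \<in> borel_measurable (traj S rho pol P T)"
    and traj_time_average_mem_Icc:
      "x \<in> space (traj S rho pol P T) \<Longrightarrow> (\<Sum>t\<in>{1..T}. f (x t)) / T \<in> {l..u}"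
    and integral_traj_time_average:
      "(\<integral>x. (\<Sum>t\<in>{1..T}. f (x t)) / T \<partial>traj S rho pol P T)
         = (\<Sum>t\<in>{1..T}. \<integral>s. f s \<partial>state_dist rho pol P t) / T"
proof -
  have component: "(\<lambda>x. f (x t)) \<in> borel_measurable (PiM {0..T} (\<lambda>_. S))" if "t \<in> {1..T}" for t
    using that by (intro measurable_compose[OF _ f] measurable_component_singleton) auto
  then show "(\<lambda>x. (\<Sum>t\<in>{1..T}. f (x t)) / T) \<in> borel_measurable (traj S rho pol P T)"
    unfolding measurable_traj[OF rho Ppi]
    by (intro borel_measurable_divide borel_measurable_sum borel_measurable_const)
  have range: "f (x t) \<in> {l..u}" if "x \<in> space (PiM {0..T} (\<lambda>_. S))" "t \<in> {1..T}" for x t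
    using that by (intro f_range) (auto simp: space_PiM)
  show "(\<Sum>t\<in>{1..T}. f (x t)) / T \<in> {l..u}" if "x \<in> space (traj S rho pol P T)" for x
  proof -
    have "real T * l \<le> (\<Sum>t\<in>{1..T}. f (x t)) \<and> (\<Sum>t\<in>{1..T}. f (x t)) \<le> real T * u"
      using that range[of x] sum_mono[of "{1..T}" "\<lambda>_. l" "\<lambda>t. f (x t)"]
        sum_mono[of "{1..T}" "\<lambda>t. f (x t)" "\<lambda>_. u"]
      by (auto simp: space_traj[OF rho Ppi])
    then show ?thesis
      using T by (auto simp: field_simps)
  qed
  have "(\<integral>x. f (x t) \<partial>traj S rho pol P T) = (\<integral>s. f s \<partial>state_dist rho pol P t)"
    if "t \<in> {1..T}" for t
    using that by (intro integral_traj_component[OF rho Ppi f]) simp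
  moreover have "integrable (traj S rho pol P T) (\<lambda>x. f (x t))" if "t \<in> {1..T}" for t
    using traj_in_space_prob_algebra[OF rho Ppi] component[OF that] range
    by (rule integrable_prob_algebra_bounded) (use that in auto)
  ultimately show "(\<integral>x. (\<Sum>t\<in>{1..T}. f (x t)) / T \<partial>traj S rho pol P T)
                     = (\<Sum>t\<in>{1..T}. \<integral>s. f s \<partial>state_dist rho pol P t) / T"
    by (simp add: integral_sum)
qed

lemma trajs_average_concentration:
  fixes f :: "'a \<Rightarrow> real" and \<alpha> w :: real
  assumes rho: "rho \<in> space (prob_algebra S)" and Ppi: "Ppi pol P \<in> S \<rightarrow>\<^sub>M prob_algebra S"
    and f: "f \<in> borel_measurable S" and f_range: "\<And>s. s \<in> space S \<Longrightarrow> f s \<in> {l..l + w}"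
    and "0 \<le> w" and MT: "1 \<le> M" "1 \<le> T" and "0 \<le> \<alpha>"
  shows "measure (trajs S rho pol P M T)
           {\<omega> \<in> space (trajs S rho pol P M T).
              \<bar>(1 / (real M * real T)) * (\<Sum>m\<in>{1..M}. \<Sum>t\<in>{1..T}. f (\<omega> m t))
               - (1 / real T) * (\<Sum>t\<in>{1..T}. \<integral>s. f s \<partial>state_dist rho pol P t)\<bar> \<ge> \<alpha>}
         \<le> 2 * exp (-2 * real M * \<alpha>\<^sup>2 / w\<^sup>2)"
proof -
  let ?Y = "\<lambda>x. (\<Sum>t\<in>{1..T}. f (x t)) / T"
  have traj_prob: "prob_space (traj S rho pol P T)"
    using traj_in_space_prob_algebra[OF rho Ppi] by (simp add: space_prob_algebra)
  show ?thesis
  proof (cases "w = 0")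
    case True
    \<comment> \<open>then the bound reads 2 * exp 0, since x / 0 = 0\<close>
    interpret prob_space "trajs S rho pol P M T"
      unfolding trajs_def using traj_prob by (rule prob_space_PiM)
    show ?thesis
      using True by (intro order_trans[OF prob_le_1]) simp
  next
    case False
    have mean: "(\<integral>x. ?Y x \<partial>traj S rho pol P T) = (\<Sum>t\<in>{1..T}. \<integral>s. f s \<partial>state_dist rho pol P t) / T"
      by (rule integral_traj_time_average[OF rho Ppi f f_range MT(2)])
    have average_eq: "\<bar>(1 / (real M * real T)) * (\<Sum>m\<in>{1..M}. \<Sum>t\<in>{1..T}. f (\<omega> m t))
                        - (1 / real T) * (\<Sum>t\<in>{1..T}. \<integral>s. f s \<partial>state_dist rho pol P t)\<bar>
                      = \<bar>(\<Sum>m\<in>{1..M}. ?Y (\<omega> m)) / card {1..M} - (\<integral>x. ?Y x \<partial>traj S rho pol P T)\<bar>" for \<omega>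
      unfolding mean using MT by (simp add: sum_divide_distrib field_simps)
    have "measure (PiM {1..M} (\<lambda>_. traj S rho pol P T))
            {\<omega> \<in> space (PiM {1..M} (\<lambda>_. traj S rho pol P T)).
               \<alpha> \<le> \<bar>(\<Sum>m\<in>{1..M}. ?Y (\<omega> m)) / card {1..M} - (\<integral>x. ?Y x \<partial>traj S rho pol P T)\<bar>}
          \<le> 2 * exp (-2 * real (card {1..M}) * \<alpha>\<^sup>2 / ((l + w) - l)\<^sup>2)"
      by (rule Hoeffding_PiM_average[OF traj_prob _ _
            traj_time_average_measurable[OF rho Ppi f f_range MT(2)]
            traj_time_average_mem_Icc[OF rho Ppi f f_range MT(2)]])
         (use False \<open>0 \<le> w\<close> \<open>0 \<le> \<alpha>\<close> MT in auto)
    then show ?thesis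
      unfolding trajs_def average_eq by simp
  qed
qed

theorem theorem3:
  fixes S :: "'a measure" and A :: "'b measure"
    and pol :: "'a \<Rightarrow> 'b measure" and P :: "'a \<Rightarrow> 'b \<Rightarrow> 'a measure"
    and C :: "'a \<Rightarrow> 'b \<Rightarrow> real" and rho :: "'a measure"
    and \<gamma> cbar k lam \<alpha> :: real and M T :: nat
  assumes pi_kernel: "pol \<in> S \<rightarrow>\<^sub>M prob_algebra A"
    and P_kernel: "(\<lambda>(s, a). P s a) \<in> S \<Otimes>\<^sub>M A \<rightarrow>\<^sub>M prob_algebra S"
    and C_meas: "(\<lambda>(s, a). C s a) \<in> borel_measurable (S \<Otimes>\<^sub>M A)"
    and C_nonneg: "\<And>s a. s \<in> space S \<Longrightarrow> a \<in> space A \<Longrightarrow> 0 \<le> C s a"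
    and C_bound: "\<And>s a. s \<in> space S \<Longrightarrow> a \<in> space A \<Longrightarrow> C s a \<le> cbar"
    and rho: "rho \<in> space (prob_algebra S)"
    and gamma: "0 < \<gamma>" "\<gamma> < 1"
    and MT: "1 \<le> M" "1 \<le> T"
    and alpha: "\<alpha> > 0"
  shows "measure (trajs S rho pol P M T)
           {\<omega> \<in> space (trajs S rho pol P M T).
              \<bar>(1 / (real M * real T)) * (\<Sum>m\<in>{1..M}. \<Sum>t\<in>{1..T}. DeltaL S pol P C \<gamma> k lam (\<omega> m t))
               - (1 / real T) * (\<Sum>t\<in>{1..T}. \<integral>s. DeltaL S pol P C \<gamma> k lam s \<partial>(state_dist rho pol P t))\<bar>
              \<ge> \<alpha>}
         \<le> 2 * exp (- (real M * \<alpha>\<^sup>2 * (1 - \<gamma>)\<^sup>2) / (((1 - k * lam)\<^sup>2 + (k - 1)\<^sup>2) * cbar\<^sup>2))"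
proof -
  let ?D = "((1 - k * lam)\<^sup>2 + (k - 1)\<^sup>2) * cbar\<^sup>2"
  let ?W = "sqrt (2 * ((1 - k * lam)\<^sup>2 + (k - 1)\<^sup>2)) * (cbar / (1 - \<gamma>))"
  have Ppi: "Ppi pol P \<in> S \<rightarrow>\<^sub>M prob_algebra S"
    using pi_kernel P_kernel by (rule Ppi_kernel)
  have C_range: "\<And>s a. s \<in> space S \<Longrightarrow> a \<in> space A \<Longrightarrow> C s a \<in> {0..cbar}"
    using C_nonneg C_bound by simp
  obtain l where \<Delta>_range: "\<And>s. s \<in> space S \<Longrightarrow> DeltaL S pol P C \<gamma> k lam s \<in> {l .. l + ?W}"
    using mdp_DeltaL_range[OF pi_kernel P_kernel C_meas C_range less_imp_le[OF gamma(1)] gamma(2)]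
    by blast
  obtain s0 where "s0 \<in> space S"
    using rho prob_space.not_empty[of rho] sets_eq_imp_space_eq[of rho S]
    by (auto simp: space_prob_algebra)
  then have "0 \<le> ?W"
    using \<Delta>_range by fastforce
  have "?W\<^sup>2 = 2 * ?D / (1 - \<gamma>)\<^sup>2"
    by (simp add: power_mult_distrib power_divide)
  then have "-2 * real M * \<alpha>\<^sup>2 / ?W\<^sup>2 = - (real M * \<alpha>\<^sup>2 * (1 - \<gamma>)\<^sup>2) / ?D"
    by simp
  then show ?thesis
    using trajs_average_concentration[OF rho Ppi mdp_DeltaL_measurable[OF pi_kernel P_kernel C_meas]
        \<Delta>_range \<open>0 \<le> ?W\<close> MT less_imp_le[OF alpha]]
    by simp
qed

end
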